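(* If $G$ is a bipartite finite simple graph of order $n$ with at least one edge, then $\mathrm{es}_{\Delta}(G)\leq n/2$.
   Context: $\mathrm{es}_{\Delta}(G)$ is the minimum number of edges of $G$ whose removal results in a subgraph with maximum degree $\Delta(G)-1$. *)

theory Defs
  imports Complex_Main
begin

definition simple_graph :: "'a set \<Rightarrow> 'a set set \<Rightarrow> bool" where
  "simple_graph V E \<longleftrightarrow> finite V \<and> (\<forall>e\<in>E. e \<subseteq> V \<and> card e = 2)"

definition degree :: "'a set set \<Rightarrow> 'a \<Rightarrow> nat" where
  "degree E v = card {e \<in> E. v \<in> e}"

definition max_degree :: "'a set \<Rightarrow> 'a set set \<Rightarrow> nat" where
  "max_degree V E = Max (insert 0 (degree E ` V))"

definition bipartite :: "'a set \<Rightarrow> 'a set set \<Rightarrow> bool" where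
  "bipartite V E \<longleftrightarrow> (\<exists>X \<subseteq> V. \<forall>e\<in>E. \<exists>x y. e = {x, y} \<and> x \<in> X \<and> y \<in> V - X)"

definition es_Delta :: "'a set \<Rightarrow> 'a set set \<Rightarrow> nat" where
  "es_Delta V E = (LEAST k. \<exists>F \<subseteq> E. card F = k \<and> max_degree V (E - F) = max_degree V E - 1)"

end

theory Submission
  imports Defs
begin

(* Pad the adjacency matrix of G by putting \<Delta> - deg v on the diagonal. The result is
   symmetric with every row summing to \<Delta>, so double counting gives Hall's condition for
   its supports, and Hall's theorem yields a permutation f of V along its support: f moves
   every vertex of maximum degree (whose diagonal entry is 0) along an edge. If G is
   bipartite with sides X and V - X, every moved vertex changes side, so the edges {u, f u}
   with u in X form a matching that covers all vertices of degree \<Delta>. Deleting it lowers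
   the maximum degree by exactly one, and a matching has at most n/2 edges. *)

definition Hall_condition :: "'i set \<Rightarrow> ('i \<Rightarrow> 'b set) \<Rightarrow> bool" where
  "Hall_condition I A \<longleftrightarrow> (\<forall>K\<subseteq>I. card K \<le> card (\<Union>(A ` K)))"

lemma Hall_condition_mono: "Hall_condition I A \<Longrightarrow> K \<subseteq> I \<Longrightarrow> Hall_condition K A"
  unfolding Hall_condition_def by blast

lemma Hall_condition_Diff_critical:
  assumes "finite I" "\<forall>i\<in>I. finite (A i)" "Hall_condition I A"
    and "K \<subseteq> I" "card (\<Union>(A ` K)) \<le> card K"
  shows "Hall_condition (I - K) (\<lambda>i. A i - \<Union>(A ` K))"
  unfolding Hall_condition_def
proof (intro allI impI)
  fix L assume L: "L \<subseteq> I - K"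
  define U where "U = \<Union>(A ` K)"
  define S where "S = \<Union>(A ` (L \<union> K))"
  have "finite L" "finite K"
    using L assms(1,4) by (meson finite_Diff finite_subset)+
  moreover have "finite S"
    unfolding S_def using L assms(2,4) \<open>finite L\<close> \<open>finite K\<close> by auto
  moreover have "U \<subseteq> S"
    unfolding U_def S_def by blast
  ultimately have card_SU: "card (S - U) = card S - card U"
    by (simp add: card_Diff_subset finite_subset)
  have "card L + card K = card (L \<union> K)"
    using L \<open>finite L\<close> \<open>finite K\<close> by (subst card_Un_disjoint) auto
  also have "\<dots> \<le> card S"
    using assms(3) L assms(4) unfolding Hall_condition_def S_def
    by (metis Diff_subset Un_subset_iff order_trans)
  finally have "card L \<le> card (S - U)"
    using card_SU assms(5) unfolding U_def by linarith
  moreover have "S - U = \<Union>((\<lambda>i. A i - U) ` L)"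
    unfolding S_def U_def by blast
  ultimately show "card L \<le> card (\<Union>((\<lambda>i. A i - \<Union>(A ` K)) ` L))"
    unfolding U_def by simp
qed

lemma Hall_condition_Diff_point:
  assumes surplus: "\<forall>L\<subseteq>I. L \<noteq> {} \<longrightarrow> L \<noteq> I \<longrightarrow> card L < card (\<Union>(A ` L))"
    and "i \<in> I"
  shows "Hall_condition (I - {i}) (\<lambda>j. A j - {x})"
  unfolding Hall_condition_def
proof (intro allI impI)
  fix L assume L: "L \<subseteq> I - {i}"
  show "card L \<le> card (\<Union>((\<lambda>j. A j - {x}) ` L))"
  proof (cases "L = {}")
    case False
    with L \<open>i \<in> I\<close> have "card L < card (\<Union>(A ` L))"
      using surplus by blast
    moreover have "card (\<Union>(A ` L)) - 1 \<le> card (\<Union>(A ` L) - {x})"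
      by (simp add: card_Diff_singleton_if)
    moreover have "\<Union>((\<lambda>j. A j - {x}) ` L) = \<Union>(A ` L) - {x}" by blast
    ultimately show ?thesis by simp
  qed simp
qed

theorem Hall_marriage:
  assumes "finite I" "\<forall>i\<in>I. finite (A i)" "Hall_condition I A"
  shows "\<exists>f. inj_on f I \<and> (\<forall>i\<in>I. f i \<in> A i)"
  using assms
proof (induction "card I" arbitrary: I A rule: less_induct)
  case less
  show ?case
  proof (cases "\<exists>K. K \<subseteq> I \<and> K \<noteq> {} \<and> K \<noteq> I \<and> card (\<Union>(A ` K)) \<le> card K")
    case True
    then obtain K where K: "K \<subseteq> I" "K \<noteq> {}" "K \<noteq> I" "card (\<Union>(A ` K)) \<le> card K"
      by blast
    define U where "U = \<Union>(A ` K)"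
    have finK: "finite K" using K(1) less.prems(1) by (rule finite_subset)
    have cardK: "card K < card I"
      using K(1,3) less.prems(1) by (simp add: psubset_card_mono psubset_eq)
    have finAK: "\<forall>i\<in>K. finite (A i)"
      using K(1) less.prems(2) by blast
    have HallK: "Hall_condition K A"
      using less.prems(3) K(1) by (rule Hall_condition_mono)
    obtain f1 where f1: "inj_on f1 K" "\<forall>i\<in>K. f1 i \<in> A i"
      using less.hyps[OF cardK finK finAK HallK] by blast
    have cardIK: "card (I - K) < card I"
      using K(1,2) less.prems(1) by (intro psubset_card_mono) auto
    have finIK: "finite (I - K)" "\<forall>i\<in>I - K. finite (A i - U)"
      using less.prems(1,2) by auto
    have HallIK: "Hall_condition (I - K) (\<lambda>i. A i - U)"
      unfolding U_def using less.prems K(1,4) by (rule Hall_condition_Diff_critical)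
    obtain f2 where f2: "inj_on f2 (I - K)" "\<forall>i\<in>I - K. f2 i \<in> A i - U"
      using less.hyps[OF cardIK finIK HallIK] by blast
    define f where "f i = (if i \<in> K then f1 i else f2 i)" for i
    have "f ` K \<subseteq> U" "f ` (I - K) \<inter> U = {}"
      using f1(2) f2(2) unfolding f_def U_def by auto
    then have "inj_on f (K \<union> (I - K))"
      using f1(1) f2(1) unfolding inj_on_Un by (auto simp: f_def inj_on_def)
    then have "inj_on f I"
      using K(1) by (simp add: Un_absorb1)
    moreover have "\<forall>i\<in>I. f i \<in> A i"
      using f1(2) f2(2) unfolding f_def by auto
    ultimately show ?thesis by blast
  next
    case no_critical: False
    show ?thesis
    proof (cases "I = {}")
      case False
      then obtain i where i: "i \<in> I" by blast
      have "card {i} \<le> card (\<Union>(A ` {i}))"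
        using less.prems(3) i unfolding Hall_condition_def by blast
      then obtain x where x: "x \<in> A i" by fastforce
      have "\<forall>L\<subseteq>I. L \<noteq> {} \<longrightarrow> L \<noteq> I \<longrightarrow> card L < card (\<Union>(A ` L))"
        using no_critical by (meson not_le)
      then have Hall_rest: "Hall_condition (I - {i}) (\<lambda>j. A j - {x})"
        using i by (rule Hall_condition_Diff_point)
      have card_rest: "card (I - {i}) < card I"
        using less.prems(1) i by (rule card_Diff1_less)
      have fin_rest: "finite (I - {i})" "\<forall>j\<in>I - {i}. finite (A j - {x})"
        using less.prems(1,2) by auto
      obtain f2 where f2: "inj_on f2 (I - {i})" "\<forall>j\<in>I - {i}. f2 j \<in> A j - {x}"
        using less.hyps[OF card_rest fin_rest Hall_rest] by blast
      define f where "f = f2(i := x)"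
      have "inj_on f (insert i (I - {i}))"
        using f2 unfolding f_def by (auto simp: inj_on_def)
      then have "inj_on f I"
        using i by (simp add: insert_absorb)
      moreover have "\<forall>j\<in>I. f j \<in> A j"
        using f2(2) x unfolding f_def by auto
      ultimately show ?thesis by blast
    qed simp
  qed
qed

definition neighbours :: "'a set set \<Rightarrow> 'a \<Rightarrow> 'a set" where
  "neighbours E v = {u. {v, u} \<in> E}"

definition matching :: "'a set set \<Rightarrow> bool" where
  "matching M \<longleftrightarrow> (\<forall>e\<in>M. \<forall>e'\<in>M. e \<inter> e' \<noteq> {} \<longrightarrow> e = e')"

lemma simple_graph_finite_edges: "simple_graph V E \<Longrightarrow> finite E"
  unfolding simple_graph_def by (meson Pow_iff finite_Pow_iff finite_subset subsetI)

lemma simple_graph_edgeD: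
  assumes "simple_graph V E" "e \<in> E"
  shows "\<exists>x y. e = {x, y} \<and> x \<noteq> y \<and> x \<in> V \<and> y \<in> V"
  using assms unfolding simple_graph_def by (metis card_2_iff insert_subset)

lemma neighbours_subset: "simple_graph V E \<Longrightarrow> neighbours E v \<subseteq> V"
  unfolding neighbours_def simple_graph_def by blast

lemma not_in_neighbours: "simple_graph V E \<Longrightarrow> v \<notin> neighbours E v"
  unfolding neighbours_def simple_graph_def by fastforce

lemma degree_eq_card_neighbours:
  assumes "simple_graph V E"
  shows "degree E v = card (neighbours E v)"
proof -
  have "{e \<in> E. v \<in> e} = (\<lambda>u. {v, u}) ` neighbours E v"
    unfolding neighbours_def using simple_graph_edgeD[OF assms]
    by (fastforce simp: insert_commute)
  moreover have "inj_on (\<lambda>u. {v, u}) (neighbours E v)"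
    by (auto simp: inj_on_def doubleton_eq_iff)
  ultimately show ?thesis
    unfolding degree_def by (simp add: card_image)
qed

lemma degree_eq_sum_adjacent:
  assumes "simple_graph V E"
  shows "degree E v = (\<Sum>u\<in>V. if {v, u} \<in> E then 1 else 0)"
proof -
  have "{u \<in> V. {v, u} \<in> E} = neighbours E v"
    using neighbours_subset[OF assms] unfolding neighbours_def by blast
  then show ?thesis
    using assms unfolding simple_graph_def
    by (simp add: sum.If_cases degree_eq_card_neighbours[OF assms] Int_def conj_commute)
qed

lemma degree_le_max_degree: "finite V \<Longrightarrow> v \<in> V \<Longrightarrow> degree E v \<le> max_degree V E"
  unfolding max_degree_def by simp

lemma max_degree_attained:
  assumes "finite V" "V \<noteq> {}"
  shows "\<exists>v\<in>V. degree E v = max_degree V E"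
proof -
  have "max_degree V E \<in> insert 0 (degree E ` V)"
    unfolding max_degree_def using assms(1) by (intro Max_in) auto
  moreover obtain v where "v \<in> V" using assms(2) by blast
  ultimately show ?thesis
    using degree_le_max_degree[OF assms(1), of v E] by auto
qed

lemma max_degree_pos:
  assumes "simple_graph V E" "E \<noteq> {}"
  shows "0 < max_degree V E"
proof -
  obtain e where "e \<in> E" using assms(2) by blast
  then obtain x y where "e = {x, y}" "x \<in> V"
    using simple_graph_edgeD[OF assms(1)] by blast
  then have "0 < degree E x"
    unfolding degree_def using \<open>e \<in> E\<close> simple_graph_finite_edges[OF assms(1)]
    by (auto simp: card_gt_0_iff)
  also have "\<dots> \<le> max_degree V E"
    using assms(1) \<open>x \<in> V\<close> unfolding simple_graph_def by (auto intro: degree_le_max_degree)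
  finally show ?thesis .
qed

lemma regular_weight_Hall_condition:
  fixes w :: "'a \<Rightarrow> 'a \<Rightarrow> nat"
  assumes "finite V" "0 < d"
    and row_sum: "\<forall>u\<in>V. (\<Sum>z\<in>V. w u z) = d"
    and sym: "\<forall>u z. w u z = w z u"
    and "K \<subseteq> V" "U \<subseteq> V" "\<forall>u\<in>K. \<forall>z\<in>V - U. w u z = 0"
  shows "card K \<le> card U"
proof -
  have "d * card K = (\<Sum>u\<in>K. \<Sum>z\<in>V. w u z)"
    using row_sum \<open>K \<subseteq> V\<close> by (simp add: subset_iff)
  also have "\<dots> = (\<Sum>u\<in>K. \<Sum>z\<in>U. w u z)"
    using assms(1,6,7) by (intro sum.cong refl sum.mono_neutral_right) auto
  also have "\<dots> = (\<Sum>z\<in>U. \<Sum>u\<in>K. w z u)"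
    using sym by (subst sum.swap) simp
  also have "\<dots> \<le> (\<Sum>z\<in>U. \<Sum>u\<in>V. w z u)"
    using assms(1,5) by (intro sum_mono sum_mono2) auto
  also have "\<dots> = d * card U"
    using row_sum \<open>U \<subseteq> V\<close> by (simp add: subset_iff)
  finally show ?thesis
    using \<open>0 < d\<close> by simp
qed

lemma exists_edge_permutation_moving_max_degree:
  assumes G: "simple_graph V E" and "E \<noteq> {}"
  obtains f where "bij_betw f V V"
    and "\<forall>u\<in>V. f u \<noteq> u \<longrightarrow> {u, f u} \<in> E"
    and "\<forall>u\<in>V. degree E u = max_degree V E \<longrightarrow> f u \<noteq> u"
proof -
  define \<Delta> where "\<Delta> = max_degree V E"
  have finV: "finite V" using G unfolding simple_graph_def by blast
  have deg_le: "degree E u \<le> \<Delta>" if "u \<in> V" for u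
    unfolding \<Delta>_def using finV that by (rule degree_le_max_degree)
  define A where "A u = neighbours E u \<union> (if degree E u < \<Delta> then {u} else {})" for u
  define w where "w u z = (if {u, z} \<in> E then 1 else 0) + (if z = u then \<Delta> - degree E u else 0)"
    for u z
  have row_sum: "\<forall>u\<in>V. (\<Sum>z\<in>V. w u z) = \<Delta>"
    using degree_eq_sum_adjacent[OF G] deg_le finV unfolding w_def by (simp add: sum.distrib)
  have sym: "\<forall>u z. w u z = w z u"
    unfolding w_def by (simp add: insert_commute)
  have A_sub: "A u \<subseteq> V" if "u \<in> V" for u
    unfolding A_def using neighbours_subset[OF G] that by auto
  have "Hall_condition V A"
    unfolding Hall_condition_def
  proof (intro allI impI)
    fix K assume "K \<subseteq> V"
    moreover have "\<Union>(A ` K) \<subseteq> V"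
      using A_sub \<open>K \<subseteq> V\<close> by blast
    moreover have "\<forall>u\<in>K. \<forall>z\<in>V - \<Union>(A ` K). w u z = 0"
      unfolding w_def A_def neighbours_def by auto
    ultimately show "card K \<le> card (\<Union>(A ` K))"
      using finV max_degree_pos[OF assms] row_sum sym unfolding \<Delta>_def
      by (intro regular_weight_Hall_condition[where w = w])
  qed
  moreover have "\<forall>u\<in>V. finite (A u)"
    using A_sub finV finite_subset by blast
  ultimately obtain f where f: "inj_on f V" "\<forall>u\<in>V. f u \<in> A u"
    using Hall_marriage finV by blast
  have "f ` V = V"
    using f A_sub finV by (intro endo_inj_surj) auto
  then have "bij_betw f V V"
    using f(1) by (simp add: bij_betw_def)
  moreover have "\<forall>u\<in>V. f u \<noteq> u \<longrightarrow> {u, f u} \<in> E"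
    using f(2) unfolding A_def neighbours_def by (auto split: if_splits)
  moreover have "\<forall>u\<in>V. degree E u = \<Delta> \<longrightarrow> f u \<noteq> u"
    using f(2) not_in_neighbours[OF G] unfolding A_def by auto
  ultimately show ?thesis
    using that unfolding \<Delta>_def by blast
qed

lemma bipartite_matching_covering_max_degree:
  assumes G: "simple_graph V E" and "bipartite V E" and "E \<noteq> {}"
  obtains M where "M \<subseteq> E" "matching M"
    and "\<forall>v\<in>V. degree E v = max_degree V E \<longrightarrow> (\<exists>e\<in>M. v \<in> e)"
proof -
  obtain X where X: "\<forall>e\<in>E. \<exists>x y. e = {x, y} \<and> x \<in> X \<and> y \<in> V - X"
    using assms(2) unfolding bipartite_def by blast
  obtain f where f: "bij_betw f V V" "\<forall>u\<in>V. f u \<noteq> u \<longrightarrow> {u, f u} \<in> E"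
    "\<forall>u\<in>V. degree E u = max_degree V E \<longrightarrow> f u \<noteq> u"
    by (rule exists_edge_permutation_moving_max_degree[OF G assms(3)])
  have crossing: "u \<in> X \<longleftrightarrow> f u \<notin> X" if "u \<in> V" "f u \<noteq> u" for u
  proof -
    have "{u, f u} \<in> E"
      using f(2) that by blast
    then obtain x y where "{u, f u} = {x, y}" "x \<in> X" "y \<notin> X"
      using X by blast
    then show ?thesis
      by (auto simp: doubleton_eq_iff)
  qed
  define D where "D = {u \<in> V \<inter> X. f u \<noteq> u}"
  define M where "M = (\<lambda>u. {u, f u}) ` D"
  have "M \<subseteq> E"
    unfolding M_def D_def using f(2) by auto
  have D_eq: "u = u'" if "u \<in> D" "u' \<in> D" "{u, f u} \<inter> {u', f u'} \<noteq> {}" for u u'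
  proof -
    have "u \<in> V" "u \<in> X" "f u \<noteq> u" "u' \<in> V" "u' \<in> X" "f u' \<noteq> u'"
      using that(1,2) unfolding D_def by auto
    moreover from this have "f u \<notin> X" "f u' \<notin> X"
      using crossing[of u] crossing[of u'] by blast+
    ultimately have "u = u' \<or> f u = f u'"
      using that(3) by blast
    then show "u = u'"
      using bij_betw_imp_inj_on[OF f(1)] that(1,2) unfolding D_def by (auto dest: inj_onD)
  qed
  have "matching M"
    unfolding matching_def
  proof (intro ballI impI)
    fix e e' assume "e \<in> M" "e' \<in> M" "e \<inter> e' \<noteq> {}"
    obtain u where "u \<in> D" "e = {u, f u}"
      using \<open>e \<in> M\<close> unfolding M_def by (rule imageE)
    moreover obtain u' where "u' \<in> D" "e' = {u', f u'}"
      using \<open>e' \<in> M\<close> unfolding M_def by (rule imageE)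
    ultimately show "e = e'"
      using D_eq \<open>e \<inter> e' \<noteq> {}\<close> by metis
  qed
  moreover have "\<exists>e\<in>M. v \<in> e" if "v \<in> V" "degree E v = max_degree V E" for v
  proof -
    have "v \<in> f ` V"
      using bij_betw_imp_surj_on[OF f(1)] \<open>v \<in> V\<close> by simp
    then obtain u where "u \<in> V" "f u = v"
      by (metis imageE)
    have "\<exists>w\<in>D. v \<in> {w, f w}"
    proof (cases "v \<in> X")
      case True
      then have "v \<in> D"
        using that f(3) unfolding D_def by simp
      then show ?thesis by blast
    next
      case False
      have "f u \<noteq> u"
        using that f(3) \<open>f u = v\<close> by auto
      then have "u \<in> X"
        using False \<open>u \<in> V\<close> \<open>f u = v\<close> crossing[of u] by blast
      then have "u \<in> D"
        unfolding D_def using \<open>f u \<noteq> u\<close> \<open>u \<in> V\<close> by simp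
      then show ?thesis
        using \<open>f u = v\<close> by blast
    qed
    then show ?thesis
      unfolding M_def by blast
  qed
  ultimately show ?thesis
    using that \<open>M \<subseteq> E\<close> by blast
qed

lemma matching_incident_edges:
  assumes "matching M" "e \<in> M" "v \<in> e"
  shows "{e' \<in> M. v \<in> e'} = {e}"
  using assms unfolding matching_def by blast

lemma degree_Diff_matching:
  assumes "finite E" "M \<subseteq> E" "matching M"
  shows "degree (E - M) v = degree E v - (if \<exists>e\<in>M. v \<in> e then 1 else 0)"
proof -
  have "{e \<in> E - M. v \<in> e} = {e \<in> E. v \<in> e} - {e \<in> M. v \<in> e}"
    by blast
  moreover have "{e \<in> M. v \<in> e} \<subseteq> {e \<in> E. v \<in> e}"
    using assms(2) by blast
  moreover have "card {e \<in> M. v \<in> e} = (if \<exists>e\<in>M. v \<in> e then 1 else 0)"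
  proof (cases "\<exists>e\<in>M. v \<in> e")
    case True
    then show ?thesis
      using matching_incident_edges[OF assms(3)] by auto
  next
    case False
    then have "{e \<in> M. v \<in> e} = {}" by blast
    with False show ?thesis by (simp only: card.empty if_False)
  qed
  moreover have "finite {e \<in> M. v \<in> e}"
    using finite_subset[OF assms(2,1)] by simp
  ultimately show ?thesis
    unfolding degree_def by (simp add: card_Diff_subset)
qed

lemma max_degree_Diff_matching:
  assumes G: "simple_graph V E" and "M \<subseteq> E" "matching M"
    and covers: "\<forall>v\<in>V. degree E v = max_degree V E \<longrightarrow> (\<exists>e\<in>M. v \<in> e)"
  shows "max_degree V (E - M) = max_degree V E - 1"
proof (cases "V = {}")
  case True
  then show ?thesis unfolding max_degree_def by simp
next
  case False
  have finV: "finite V" using G unfolding simple_graph_def by blast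
  have deg: "degree (E - M) v = degree E v - (if \<exists>e\<in>M. v \<in> e then 1 else 0)" for v
    using simple_graph_finite_edges[OF G] assms(2,3) by (rule degree_Diff_matching)
  obtain v0 where v0: "v0 \<in> V" "degree E v0 = max_degree V E"
    using max_degree_attained[OF finV False] by blast
  have "degree (E - M) v \<le> max_degree V E - 1" if "v \<in> V" for v
    using deg[of v] covers that degree_le_max_degree[OF finV that, of E]
    by (cases "degree E v = max_degree V E") auto
  moreover have "degree (E - M) v0 = max_degree V E - 1"
    using deg[of v0] covers v0 by simp
  then have "max_degree V E - 1 \<in> insert 0 (degree (E - M) ` V)"
    using v0(1) by (metis image_eqI insertI2)
  ultimately show ?thesis
    unfolding max_degree_def[of V "E - M"] using finV by (intro Max_eqI) auto
qed

lemma matching_card_le: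
  assumes G: "simple_graph V E" and "M \<subseteq> E" "matching M"
  shows "2 * card M \<le> card V"
proof -
  have two: "card e = 2" if "e \<in> M" for e
    using G assms(2) that unfolding simple_graph_def by blast
  have "pairwise disjnt M"
    using assms(3) unfolding matching_def pairwise_def disjnt_def by blast
  then have "card (\<Union>M) = (\<Sum>e\<in>M. card e)"
    using two by (intro card_Union_disjoint) (auto intro: card_ge_0_finite)
  also have "\<dots> = 2 * card M"
    using two by simp
  finally have "card (\<Union>M) = 2 * card M" .
  moreover have "\<Union>M \<subseteq> V"
    using G assms(2) unfolding simple_graph_def by blast
  moreover have "finite V"
    using G unfolding simple_graph_def by blast
  ultimately show ?thesis
    using card_mono by metis
qed

lemma es_Delta_le_card:
  assumes "F \<subseteq> E" "max_degree V (E - F) = max_degree V E - 1"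
  shows "es_Delta V E \<le> card F"
  unfolding es_Delta_def using assms by (intro Least_le) blast

theorem corollary5p1:
  fixes V :: "'a set" and E :: "'a set set"
  assumes "simple_graph V E" and "bipartite V E" and "E \<noteq> {}"
  shows "real (es_Delta V E) \<le> real (card V) / 2"
proof -
  obtain M where M: "M \<subseteq> E" "matching M"
    "\<forall>v\<in>V. degree E v = max_degree V E \<longrightarrow> (\<exists>e\<in>M. v \<in> e)"
    by (rule bipartite_matching_covering_max_degree[OF assms])
  have "es_Delta V E \<le> card M"
    using M(1) max_degree_Diff_matching[OF assms(1) M] by (rule es_Delta_le_card)
  moreover have "2 * card M \<le> card V"
    using assms(1) M(1,2) by (rule matching_card_le)
  ultimately show ?thesis by linarith
qed

end
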